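(* Let $e(\tau,s)$ be a complete equation of state and let $s_0$ be fixed. Assume the energy isentrope $\tau\mapsto e_{s_0}(\tau):=e(\tau,s_0)$ is convex on $(0,\infty)$. For $\bm u=(\rho,\bm m,E)\in\mathbb R\times\mathbb R^d\times\mathbb R$ with $\rho>0$, set $\tau(\bm u)=\rho^{-1}$ and $\mathsf e(\bm u)=\rho^{-1}E-\tfrac12\|\rho^{-1}\bm m\|_{\ell^2}^2$. Then the functional $$\bm u\longmapsto \rho\,\mathsf e(\bm u)-\rho\, e_{s_0}(\tau(\bm u))$$ is a concave function of $\bm u$ on $\{\rho>0\}$.
   Context: A complete equation of state is a function $e(\tau,s)$ giving the specific internal energy in terms of specific volume $\tau>0$ and specific entropy $s$; the pressure is $p=-\partial_\tau e$ and the temperature $T=\partial_s e$. The "energy isentrope" at entropy $s$ is the one-variable function $\tau\mapsto e(\tau,s)$. *)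

theory Defs
  imports "HOL-Analysis.Analysis"
begin

text \<open>Conserved variables u = (rho, m, E) in R x R^d x R, with m :: real^'d.\<close>

definition spec_vol :: "real \<times> (real ^ 'd) \<times> real \<Rightarrow> real" where
  "spec_vol u = inverse (fst u)"

definition spec_int_energy :: "real \<times> (real ^ 'd) \<times> real \<Rightarrow> real" where
  "spec_int_energy u = inverse (fst u) * snd (snd u)
      - (1/2) * (norm (inverse (fst u) *\<^sub>R fst (snd u)))\<^sup>2"

end

theory Submission
  imports Defs
begin

(* On rho > 0 the functional equals E - 1/2 rho |m/rho|^2 - rho e_s0(1/rho). Both subtracted
   terms are perspectives t f(x/t) of convex functions -- of the squared norm at (rho, m) and of
   the isentrope at (rho, 1) -- and the perspective of a convex function is jointly convex,
   because x/t for a convex combination of points (t_i, x_i) is the convex combination of the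
   x_i/t_i with weights proportional to t_i. *)

definition perspective :: "('a::real_vector \<Rightarrow> real) \<Rightarrow> real \<times> 'a \<Rightarrow> real" where
  "perspective f = (\<lambda>(t, x). t * f (inverse t *\<^sub>R x))"

lemma convex_on_perspective:
  fixes f :: "'a::real_vector \<Rightarrow> real"
  assumes f: "convex_on C f"
  shows "convex_on {(t, x). t > 0 \<and> inverse t *\<^sub>R x \<in> C} (perspective f)"
proof -
  let ?D = "{(t, x). t > 0 \<and> inverse t *\<^sub>R x \<in> C}"
  have combine: "u *\<^sub>R p + v *\<^sub>R q \<in> ?D \<and>
      perspective f (u *\<^sub>R p + v *\<^sub>R q) \<le> u * perspective f p + v * perspective f q"
    if "p \<in> ?D" "q \<in> ?D" "u \<ge> 0" "v \<ge> 0" "u + v = 1" for p q u v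
  proof -
    obtain t1 x1 t2 x2 where p: "p = (t1, x1)" and q: "q = (t2, x2)" by fastforce
    have t1: "t1 > 0" and x1: "inverse t1 *\<^sub>R x1 \<in> C"
      and t2: "t2 > 0" and x2: "inverse t2 *\<^sub>R x2 \<in> C" using that p q by auto
    define t where "t = u * t1 + v * t2"
    have t: "t > 0"
      using that t1 t2 unfolding t_def by (smt (verit) mult_nonneg_nonneg mult_pos_pos)
    define a where "a = u * t1 / t"
    define b where "b = v * t2 / t"
    have a: "a \<ge> 0" and b: "b \<ge> 0" and ab: "a + b = 1"
      using that t t1 t2 by (simp_all add: a_def b_def t_def add_divide_distrib [symmetric])
    have point: "inverse t *\<^sub>R (u *\<^sub>R x1 + v *\<^sub>R x2)
        = a *\<^sub>R (inverse t1 *\<^sub>R x1) + b *\<^sub>R (inverse t2 *\<^sub>R x2)"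
      using t1 t2 by (simp add: a_def b_def scaleR_add_right field_simps)
    have in_C: "inverse t *\<^sub>R (u *\<^sub>R x1 + v *\<^sub>R x2) \<in> C"
      unfolding point by (rule convexD [OF convex_on_imp_convex [OF f] x1 x2 a b ab])
    have "f (inverse t *\<^sub>R (u *\<^sub>R x1 + v *\<^sub>R x2))
        \<le> a * f (inverse t1 *\<^sub>R x1) + b * f (inverse t2 *\<^sub>R x2)"
      unfolding point using f x1 x2 a b ab unfolding convex_on_def by blast
    then have "t * f (inverse t *\<^sub>R (u *\<^sub>R x1 + v *\<^sub>R x2))
        \<le> t * (a * f (inverse t1 *\<^sub>R x1) + b * f (inverse t2 *\<^sub>R x2))"
      using t by simp
    also have "\<dots> = u * (t1 * f (inverse t1 *\<^sub>R x1)) + v * (t2 * f (inverse t2 *\<^sub>R x2))"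
      using t by (simp add: a_def b_def field_simps)
    finally show ?thesis
      using t in_C by (simp add: p q t_def perspective_def)
  qed
  have "convex ?D"
    using combine by (simp add: convex_def)
  then show ?thesis
    using combine by (simp add: convex_on_def)
qed

lemma convex_on_compose_affine:
  assumes f: "convex_on T f" and h: "linear h" and S: "convex S"
    and maps_to: "\<And>x. x \<in> S \<Longrightarrow> h x + c \<in> T"
  shows "convex_on S (\<lambda>x. f (h x + c))"
proof -
  have "h (u *\<^sub>R x + v *\<^sub>R y) + c = u *\<^sub>R (h x + c) + v *\<^sub>R (h y + c)"
    if "u + v = 1" for x y u v
    using that by (simp add: linear_add [OF h] linear_scale [OF h] scaleR_add_right
        flip: scaleR_add_left add.assoc)
  with f S maps_to show ?thesis
    by (simp add: convex_on_def)
qed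

lemma convex_on_norm_power2: "convex_on UNIV (\<lambda>x::'a::real_normed_vector. (norm x)\<^sup>2)"
proof (rule convex_onI)
  fix t :: real and x y :: 'a
  assume t: "0 < t" "t < 1"
  have "norm ((1 - t) *\<^sub>R x + t *\<^sub>R y) \<le> (1 - t) * norm x + t * norm y"
    using t norm_triangle_ineq [of "(1 - t) *\<^sub>R x" "t *\<^sub>R y"] by simp
  then have "(norm ((1 - t) *\<^sub>R x + t *\<^sub>R y))\<^sup>2 \<le> ((1 - t) * norm x + t * norm y)\<^sup>2"
    by (simp add: power_mono)
  also have "\<dots> \<le> (1 - t) * (norm x)\<^sup>2 + t * (norm y)\<^sup>2"
    using convex_onD [OF convex_power2, of t "norm x" "norm y"] t by simp
  finally show "(norm ((1 - t) *\<^sub>R x + t *\<^sub>R y))\<^sup>2 \<le> (1 - t) * (norm x)\<^sup>2 + t * (norm y)\<^sup>2" .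
qed simp

lemma concave_on_eq:
  assumes "concave_on S f" and "\<And>x. x \<in> S \<Longrightarrow> f x = g x"
  shows "concave_on S g"
  using assms by (auto simp: concave_on_iff convexD)

theorem proposition2p8:
  fixes e :: "real \<Rightarrow> real \<Rightarrow> real" and s0 :: real
  assumes "convex_on {0<..} (\<lambda>\<tau>. e \<tau> s0)"
  shows "concave_on {u :: real \<times> (real ^ 'd) \<times> real. fst u > 0}
           (\<lambda>u. fst u * spec_int_energy u - fst u * e (spec_vol u) s0)"
proof -
  let ?S = "{u :: real \<times> (real ^ 'd) \<times> real. fst u > 0}"
  have S: "convex ?S"
    using convex_linear_vimage [OF linear_fst, of "{0<..}"] by (force simp: vimage_def)
  have isentrope: "convex_on ?S (\<lambda>u. perspective (\<lambda>\<tau>. e \<tau> s0) (fst u, 1))"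
  proof -
    have "linear (\<lambda>u::real \<times> (real ^ 'd) \<times> real. (fst u, 0::real))"
      by (rule linearI) simp_all
    from convex_on_compose_affine [OF convex_on_perspective [OF assms] this S, of "(0, 1)"]
    show ?thesis by simp
  qed
  have kinetic: "convex_on ?S (\<lambda>u. perspective (\<lambda>m. (norm m)\<^sup>2) (fst u, fst (snd u)))"
  proof -
    have "linear (\<lambda>u::real \<times> (real ^ 'd) \<times> real. (fst u, fst (snd u)))"
      by (rule linearI) simp_all
    from convex_on_compose_affine [OF convex_on_perspective [OF convex_on_norm_power2] this S, of 0]
    show ?thesis by simp
  qed
  have total: "concave_on ?S (\<lambda>u. snd (snd u))"
    using S by (simp add: concave_on_iff)
  have "concave_on ?S (\<lambda>u. snd (snd u) - ((1/2) * perspective (\<lambda>m. (norm m)\<^sup>2) (fst u, fst (snd u))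
      + perspective (\<lambda>\<tau>. e \<tau> s0) (fst u, 1)))"
    using total kinetic isentrope by (intro concave_on_diff convex_on_add convex_on_cmul) auto
  then show ?thesis
    by (rule concave_on_eq)
      (simp add: perspective_def spec_int_energy_def spec_vol_def field_simps power2_eq_square)
qed

end
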